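(* In the single-authority allocation model described in the context, if there is no uncertainty (i.e., $\Lambda$ is a Dirac measure on a single state), then there exist an optimal priority mechanism and an optimal quota mechanism, i.e., ones that maximize $\Xi(\cdot,\Lambda)$ over all mechanisms.
   Context: An authority allocates a resource of measure $q\in(0,1)$ to a continuum of agents with types $\theta=(s,m)\in[0,1]\times\mathcal M$ ($\mathcal M$ finite). States $\omega$ are type distributions with densities $f_\omega$; beliefs $\Lambda$ over states. Allocations $\mu:\Theta\to\{0,1\}$ measurable allocating measure at most $q$; a mechanism maps states to such allocations. With $h:[0,1]\to\mathbb R_+$ continuous strictly increasing, $\bar s_h(\mu,\omega)=\int\mu h\,dF_\omega$, $x_m(\mu,\omega)=\int_0^1\mu(s,m)f_\omega(s,m)ds$; utility $\xi=g(\bar s_h+\sum_mu_m(x_m))$ with $g$ continuous strictly increasing and $u_m$ differentiable concave, $h(0)+u_m'(q)\ge0$ for all $m$; $\Xi(\phi,\Lambda)=\int\xi(\bar s_h(\phi(\omega),\omega),x(\phi(\omega),\omega))d\Lambda(\omega)$. A priority mechanism with policy $P$ (a priority $P(s,m)$ for each type) allocates in order of priorities until measure $q$ is allocated, ties broken uniformly at random. A quota mechanism with policy $(Q,D)$ ($Q_m$ measure reserved for group $m$, residual $Q_R=q-\sum_mQ_m$ open to all, $D:\mathcal M\cup\{R\}\to\{1,\dots,|\mathcal M|+1\}$ a bijection) fills the reserves of $D^{-1}(1),D^{-1}(2),\dots$ in order, by descending score within each, with unfilled reserves allocated in a final round open to all. *)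

theory Defs
  imports "HOL-Probability.Probability"
begin

text \<open>Types are pairs (s, m) with score s in [0,1] and group m in a finite type 'm.
  A state is identified with its density d :: real \<times> 'm \<Rightarrow> real (only s in [0,1] matters).
  Allocations are real-valued functions on types (values in {0,1} for genuine allocations).\<close>

definition xm :: "(real \<times> 'm \<Rightarrow> real) \<Rightarrow> (real \<times> 'm \<Rightarrow> real) \<Rightarrow> 'm \<Rightarrow> real" where
  "xm \<mu> d m = (LINT s:{0..1}|lborel. \<mu> (s, m) * d (s, m))"

definition total :: "(real \<times> 'm::finite \<Rightarrow> real) \<Rightarrow> (real \<times> 'm \<Rightarrow> real) \<Rightarrow> real" where
  "total \<mu> d = (\<Sum>m\<in>UNIV. xm \<mu> d m)"

definition sbar :: "(real \<Rightarrow> real) \<Rightarrow> (real \<times> 'm::finite \<Rightarrow> real) \<Rightarrow> (real \<times> 'm \<Rightarrow> real) \<Rightarrow> real" where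
  "sbar h \<mu> d = (\<Sum>m\<in>UNIV. LINT s:{0..1}|lborel. \<mu> (s, m) * h s * d (s, m))"

definition xi :: "(real \<Rightarrow> real) \<Rightarrow> ('m::finite \<Rightarrow> real \<Rightarrow> real) \<Rightarrow> (real \<Rightarrow> real)
    \<Rightarrow> (real \<times> 'm \<Rightarrow> real) \<Rightarrow> (real \<times> 'm \<Rightarrow> real) \<Rightarrow> real" where
  "xi g u h \<mu> d = g (sbar h \<mu> d + (\<Sum>m\<in>UNIV. u m (xm \<mu> d m)))"

definition Xi :: "(real \<Rightarrow> real) \<Rightarrow> ('m::finite \<Rightarrow> real \<Rightarrow> real) \<Rightarrow> (real \<Rightarrow> real)
    \<Rightarrow> ('w \<Rightarrow> real \<times> 'm \<Rightarrow> real) \<Rightarrow> ('w \<Rightarrow> real \<times> 'm \<Rightarrow> real) \<Rightarrow> 'w measure \<Rightarrow> real" where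
  "Xi g u h f \<phi> \<Lambda> = (LINT w|\<Lambda>. xi g u h (\<phi> w) (f w))"

definition allocation :: "real \<Rightarrow> (real \<times> 'm::finite \<Rightarrow> real) \<Rightarrow> (real \<times> 'm \<Rightarrow> real) \<Rightarrow> bool" where
  "allocation q d \<mu> \<longleftrightarrow>
     (\<forall>\<theta>. \<mu> \<theta> \<in> {0, 1}) \<and>
     (\<forall>m. set_borel_measurable borel {0..1} (\<lambda>s. \<mu> (s, m))) \<and>
     total \<mu> d \<le> q"

definition mechanism :: "real \<Rightarrow> ('w \<Rightarrow> real \<times> 'm::finite \<Rightarrow> real) \<Rightarrow> ('w \<Rightarrow> real \<times> 'm \<Rightarrow> real) \<Rightarrow> bool" where
  "mechanism q f \<phi> \<longleftrightarrow> (\<forall>w. allocation q (f w) (\<phi> w))"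

text \<open>Mass of types with priority strictly above p, and mass of types with priority exactly p.
  Higher priority value = served earlier.\<close>
definition prio_upper :: "(real \<times> 'm::finite \<Rightarrow> real) \<Rightarrow> (real \<times> 'm \<Rightarrow> real) \<Rightarrow> real \<Rightarrow> real" where
  "prio_upper P d p = total (\<lambda>\<theta>. if P \<theta> > p then 1 else 0) d"

definition prio_tie :: "(real \<times> 'm::finite \<Rightarrow> real) \<Rightarrow> (real \<times> 'm \<Rightarrow> real) \<Rightarrow> real \<Rightarrow> real" where
  "prio_tie P d p = total (\<lambda>\<theta>. if P \<theta> = p then 1 else 0) d"

text \<open>Allocation of the priority mechanism in state d: everyone is served if the total mass is
  at most q; otherwise all types with priority above the cutoff p* are served and the tied class at
  p* is served with the uniform (random tie-breaking) fraction that exhausts q.\<close>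
definition prio_alloc :: "real \<Rightarrow> (real \<times> 'm::finite \<Rightarrow> real) \<Rightarrow> (real \<times> 'm \<Rightarrow> real) \<Rightarrow> real \<times> 'm \<Rightarrow> real" where
  "prio_alloc q P d \<theta> =
     (if total (\<lambda>_. 1) d \<le> q then 1
      else (let p = Inf {p. prio_upper P d p \<le> q};
                a = (q - prio_upper P d p) / prio_tie P d p
            in if P \<theta> > p then 1 else if P \<theta> = p then a else 0))"

definition prio_mech :: "real \<Rightarrow> (real \<times> 'm::finite \<Rightarrow> real) \<Rightarrow> ('w \<Rightarrow> real \<times> 'm \<Rightarrow> real) \<Rightarrow> 'w \<Rightarrow> real \<times> 'm \<Rightarrow> real" where
  "prio_mech q P f = (\<lambda>w. prio_alloc q P (f w))"

definition mass :: "(real \<times> 'm::finite \<Rightarrow> real) \<Rightarrow> (real \<times> 'm) set \<Rightarrow> real" where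
  "mass d A = total (indicator A) d"

text \<open>One round: given the already allocated set A, allocate measure k to the not yet allocated
  agents of the eligible groups E, by descending score.\<close>
definition fill :: "(real \<times> 'm::finite \<Rightarrow> real) \<Rightarrow> (real \<times> 'm) set \<Rightarrow> 'm set \<Rightarrow> real \<Rightarrow> (real \<times> 'm) set" where
  "fill d A E k =
     (let R = {\<theta>. snd \<theta> \<in> E \<and> \<theta> \<notin> A}
      in if mass d R \<le> k then A \<union> R
         else A \<union> {\<theta>\<in>R. fst \<theta> > Inf {t. mass d {\<theta>\<in>R. fst \<theta> > t} \<le> k}})"

text \<open>Reserves are indexed by 'm option: Some m is the reserve of group m, None the open residual R.\<close>
definition reserve_amt :: "real \<Rightarrow> ('m::finite \<Rightarrow> real) \<Rightarrow> 'm option \<Rightarrow> real" where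
  "reserve_amt q Q r = (case r of None \<Rightarrow> q - (\<Sum>m\<in>UNIV. Q m) | Some m \<Rightarrow> Q m)"

definition reserve_groups :: "'m option \<Rightarrow> 'm set" where
  "reserve_groups r = (case r of None \<Rightarrow> UNIV | Some m \<Rightarrow> {m})"

definition quota_policy :: "real \<Rightarrow> ('m::finite \<Rightarrow> real) \<Rightarrow> ('m option \<Rightarrow> nat) \<Rightarrow> bool" where
  "quota_policy q Q D \<longleftrightarrow> (\<forall>m. Q m \<ge> 0) \<and> (\<Sum>m\<in>UNIV. Q m) \<le> q \<and>
      bij_betw D UNIV {1..CARD('m) + 1}"

definition quota_alloc :: "real \<Rightarrow> ('m::finite \<Rightarrow> real) \<Rightarrow> ('m option \<Rightarrow> nat) \<Rightarrow> (real \<times> 'm \<Rightarrow> real) \<Rightarrow> real \<times> 'm \<Rightarrow> real" where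
  "quota_alloc q Q D d =
     (let A = fold (\<lambda>i A. fill d A (reserve_groups (inv_into UNIV D i)) (reserve_amt q Q (inv_into UNIV D i)))
                [1..<CARD('m) + 2] {}
      in indicator (fill d A UNIV (q - mass d A)))"

definition quota_mech :: "real \<Rightarrow> ('m::finite \<Rightarrow> real) \<Rightarrow> ('m option \<Rightarrow> nat) \<Rightarrow> ('w \<Rightarrow> real \<times> 'm \<Rightarrow> real) \<Rightarrow> 'w \<Rightarrow> real \<times> 'm \<Rightarrow> real" where
  "quota_mech q Q D f = (\<lambda>w. quota_alloc q Q D (f w))"

end

theory Submission
  imports Defs
begin

(* With a Dirac belief the authority faces a single state, and since g is increasing it maximises
   the welfare sbar + sum_m u_m(x_m) of one allocation.  Within a group, shifting service towards
   higher scores at fixed group mass raises sbar, so every allocation is dominated by a threshold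
   allocation (serve group m above a score t_m).  Welfare is continuous on the compact set of
   feasible threshold vectors, so an optimal one exists.  The priority policy with the 0-1
   priority of that threshold allocation, and the quota policy reserving for each group the mass
   above its threshold (group reserves first, residual last), serve the same agents up to null
   sets and possibly more; serving more never hurts because u_m is concave and
   h(0) + u_m'(q) >= 0. *)

lemma set_integrable_bounded_mult:
  fixes a w :: "real \<Rightarrow> real"
  assumes a: "set_borel_measurable borel S a" and B: "\<And>s. s \<in> S \<Longrightarrow> \<bar>a s\<bar> \<le> B"
    and w: "set_integrable lborel S w"
  shows "set_integrable lborel S (\<lambda>s. a s * w s)"
proof (rule set_integrable_bound[OF set_integrable_mult_right[OF w, of B]])
  have "(\<lambda>x. indicator S x *\<^sub>R w x) \<in> borel_measurable borel"
    using w unfolding set_integrable_def by auto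
  with a have "(\<lambda>x. (indicator S x *\<^sub>R a x) * (indicator S x *\<^sub>R w x)) \<in> borel_measurable borel"
    unfolding set_borel_measurable_def by measurable
  moreover have "(\<lambda>x. (indicator S x *\<^sub>R a x) * (indicator S x *\<^sub>R w x)) = (\<lambda>x. indicator S x *\<^sub>R (a x * w x))"
    by (auto simp: indicator_def)
  ultimately show "set_borel_measurable lborel S (\<lambda>s. a s * w s)"
    unfolding set_borel_measurable_def by simp
  show "AE x in lborel. x \<in> S \<longrightarrow> norm (a x * w x) \<le> norm (B * w x)"
  proof (intro AE_I2 impI)
    fix x assume "x \<in> S"
    then have "\<bar>a x\<bar> \<le> \<bar>B\<bar>" using B[of x] by linarith
    then show "norm (a x * w x) \<le> norm (B * w x)" by (simp add: abs_mult mult_right_mono)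
  qed
qed

lemma continuous_on_tail_integral:
  fixes w :: "real \<Rightarrow> real"
  assumes w: "set_integrable lborel S w"
  shows "continuous_on UNIV (\<lambda>t. LINT s:S|lborel. (if t < s then w s else 0))"
proof -
  have "(\<lambda>x. indicator S x *\<^sub>R w x) \<in> borel_measurable lborel"
    using w unfolding set_integrable_def by auto
  then have "(\<lambda>s. indicator {t<..} s * (indicator S s *\<^sub>R w s)) \<in> borel_measurable lborel" for t
    by measurable
  moreover have "(\<lambda>s. indicator {t<..} s * (indicator S s *\<^sub>R w s)) =
      (\<lambda>s. indicator S s *\<^sub>R (if t < s then w s else 0))" for t
    by (auto simp: indicator_def)
  ultimately have meas: "(\<lambda>s. indicator S s *\<^sub>R (if t < s then w s else 0)) \<in> borel_measurable lborel" for t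
    by simp
  have bound: "integrable lborel (\<lambda>x. indicator S x *\<^sub>R \<bar>w x\<bar>)"
    using set_integrable_abs[OF w] unfolding set_integrable_def .
  show ?thesis
  proof (intro continuous_at_imp_continuous_on ballI continuous_at_sequentiallyI)
    fix a :: real and t :: "nat \<Rightarrow> real"
    assume t: "t \<longlonglongrightarrow> a"
    have "(\<lambda>n. indicator S x *\<^sub>R (if t n < x then w x else 0)) \<longlonglongrightarrow>
            indicator S x *\<^sub>R (if a < x then w x else 0)" if "x \<noteq> a" for x
    proof (rule tendsto_eventually)
      from that consider "a < x" | "x < a" by linarith
      then have "eventually (\<lambda>n. (t n < x) = (a < x)) sequentially"
        by cases (auto elim: eventually_mono[OF order_tendstoD(2)[OF t]]
                          eventually_mono[OF order_tendstoD(1)[OF t]])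
      then show "eventually (\<lambda>n. indicator S x *\<^sub>R (if t n < x then w x else 0) =
                   indicator S x *\<^sub>R (if a < x then w x else 0)) sequentially"
        by eventually_elim simp
    qed
    note conv = this
    have "AE x in lborel. (\<lambda>n. indicator S x *\<^sub>R (if t n < x then w x else 0)) \<longlonglongrightarrow>
                 indicator S x *\<^sub>R (if a < x then w x else 0)"
      using AE_lborel_singleton[of a] by (rule AE_mp) (intro AE_I2 impI conv)
    then show "(\<lambda>n. LINT s:S|lborel. (if t n < s then w s else 0)) \<longlonglongrightarrow>
          (LINT s:S|lborel. (if a < s then w s else 0))"
      unfolding set_lebesgue_integral_def
      by (rule integral_dominated_convergence[OF meas meas bound]) (auto simp: indicator_def)
  qed
qed

lemma Inf_sublevel_attains_level:
  fixes M :: "real \<Rightarrow> real"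
  assumes cont: "continuous_on UNIV M" and below: "\<And>t. t < 0 \<Longrightarrow> M t = c"
    and above: "\<And>t. 1 \<le> t \<Longrightarrow> M t = 0" and k: "0 \<le> k" "k < c"
  shows "Inf {t. M t \<le> k} \<in> {0..1} \<and> M (Inf {t. M t \<le> k}) = k"
proof -
  define S where "S = {t. M t \<le> k}"
  have "1 \<in> S" using above k by (simp add: S_def)
  have S_nonneg: "0 \<le> t" if "t \<in> S" for t
    using that below[of t] k by (force simp: S_def)
  then have bdd: "bdd_below S" by (auto simp: bdd_below_def)
  have "closed S" unfolding S_def by (intro closed_Collect_le cont continuous_on_const)
  then have "Inf S \<in> S" using \<open>1 \<in> S\<close> bdd closed_contains_Inf by blast
  then have le: "M (Inf S) \<le> k" and ge0: "0 \<le> Inf S" using S_nonneg by (auto simp: S_def)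
  have le1: "Inf S \<le> 1" using \<open>1 \<in> S\<close> bdd by (rule cInf_lower)
  have "k \<le> M (Inf S)"
  proof (rule ccontr)
    assume "\<not> k \<le> M (Inf S)"
    then obtain x where x: "-1 \<le> x" "x \<le> Inf S" "M x = k"
      using IVT2'[of M "Inf S" k "-1"] below[of "-1"] k ge0 continuous_on_subset[OF cont] by force
    then have "x \<in> S" by (simp add: S_def)
    then show False using x \<open>\<not> k \<le> M (Inf S)\<close> cInf_lower[OF _ bdd, of x] by simp
  qed
  with le ge0 le1 show ?thesis unfolding S_def by simp
qed

lemma concave_on_increment_ge_deriv:
  fixes U :: "real \<Rightarrow> real"
  assumes conc: "concave_on A U" and "connected A" and c: "c \<in> interior A" and "x \<in> A"
    and xy: "x \<le> y" "y \<le> c" and D: "(U has_real_derivative D) (at c within A)"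
  shows "D * (y - x) \<le> U y - U x"
proof -
  define f where "f z = D * z - U z" for z
  have "convex_on A (\<lambda>z. D * z)"
    using concave_on_imp_convex[OF conc] by (auto simp: convex_on_def algebra_simps)
  then have cvx: "convex_on A f"
    unfolding f_def using conc by (rule convex_on_diff)
  have "(f has_real_derivative 0) (at c within A)"
    unfolding f_def using D by (auto intro!: derivative_eq_intros)
  from convex_on_imp_above_tangent[OF cvx \<open>connected A\<close> c _ this]
  have min: "f c \<le> f z" if "z \<in> A" for z
    using that by simp
  \<comment> \<open>\<open>f\<close> is convex with its minimum at \<open>c\<close>, hence nonincreasing on \<open>[x, c]\<close>.\<close>
  have "f y \<le> f x"
  proof (cases "x = c")
    case False
    have "c \<in> A" using c interior_subset by blast
    then have "{x..c} \<subseteq> A" using \<open>connected A\<close> \<open>x \<in> A\<close> by (simp add: connected_contains_Icc)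
    then have "f y \<le> (f c - f x) / (c - x) * (y - x) + f x"
      using xy by (intro convex_onD_Icc' convex_on_subset[OF cvx]) auto
    also have "\<dots> \<le> f x"
      using min[OF \<open>x \<in> A\<close>] xy False by (simp add: mult_nonpos_nonneg divide_nonpos_nonneg)
    finally show ?thesis .
  qed (use xy in simp)
  then show ?thesis by (simp add: f_def algebra_simps)
qed

lemma bij_betw_reserves_then_residual:
  assumes e: "bij_betw e (UNIV :: 'm::finite set) {0..<CARD('m)}"
  shows "bij_betw (\<lambda>r. case r of None \<Rightarrow> CARD('m) + 1 | Some m \<Rightarrow> Suc (e m)) UNIV {1..CARD('m) + 1}"
    (is "bij_betw ?D _ _")
proof -
  have e_lt: "e m < CARD('m)" for m
    using e by (auto simp: bij_betw_def)
  have inj: "inj ?D"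
    using e e_lt by (auto simp: inj_def bij_betw_def split: option.splits) (metis less_irrefl)
  moreover have "range ?D \<subseteq> {1..CARD('m) + 1}"
    using e_lt by (auto simp: Suc_le_eq less_SucI split: option.splits)
  moreover have "card (range ?D) = card {1..CARD('m) + 1}"
    using card_image[OF inj] by simp
  ultimately show ?thesis
    by (simp add: bij_betw_def card_subset_eq)
qed

section \<open>Fractional allocations\<close>

text \<open>Allocations are allowed to take values in \<open>[0, 1]\<close>, since the uniform tie-breaking
  of a priority mechanism serves a tied class only partially.\<close>
definition fractional_allocation :: "(real \<times> 'm \<Rightarrow> real) \<Rightarrow> bool" where
  "fractional_allocation \<mu> \<longleftrightarrow>
     (\<forall>\<theta>. 0 \<le> \<mu> \<theta> \<and> \<mu> \<theta> \<le> 1) \<and> (\<forall>m. set_borel_measurable borel {0..1} (\<lambda>s. \<mu> (s, m)))"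

lemma allocation_imp_fractional: "allocation q d \<mu> \<Longrightarrow> fractional_allocation \<mu>"
  unfolding allocation_def fractional_allocation_def by (metis insert_iff order.refl singletonD zero_le_one)

lemma fractional_allocation_const: "0 \<le> a \<Longrightarrow> a \<le> 1 \<Longrightarrow> fractional_allocation (\<lambda>_. a)"
  unfolding fractional_allocation_def set_borel_measurable_def by simp

lemma fractional_allocation_mix:
  assumes P: "fractional_allocation P" and a: "0 \<le> a" "a \<le> 1"
  shows "fractional_allocation (\<lambda>\<theta>. a + (1 - a) * P \<theta>)"
  unfolding fractional_allocation_def
proof (intro conjI allI)
  fix \<theta>
  have "0 \<le> P \<theta>" "P \<theta> \<le> 1" using P unfolding fractional_allocation_def by blast+
  moreover have "(1 - a) * P \<theta> \<le> 1 - a" using a \<open>P \<theta> \<le> 1\<close> by (simp add: mult_left_le)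
  ultimately show "0 \<le> a + (1 - a) * P \<theta>" "a + (1 - a) * P \<theta> \<le> 1" using a by auto
next
  fix m
  have "(\<lambda>x. indicator {0..1} x *\<^sub>R P (x, m)) \<in> borel_measurable borel"
    using P unfolding fractional_allocation_def set_borel_measurable_def by auto
  then have "(\<lambda>x. a * indicator {0..1} x + (1 - a) * (indicator {0..1} x *\<^sub>R P (x, m))) \<in> borel_measurable borel"
    by measurable
  moreover have "(\<lambda>x. a * indicator {0..1} x + (1 - a) * (indicator {0..1} x *\<^sub>R P (x, m))) =
      (\<lambda>x. indicator {0..1} x *\<^sub>R (a + (1 - a) * P (x, m)))"
    by (auto simp: indicator_def)
  ultimately show "set_borel_measurable borel {0..1} (\<lambda>s. a + (1 - a) * P (s, m))"
    unfolding set_borel_measurable_def by simp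
qed

definition borel_sections :: "(real \<times> 'm) set \<Rightarrow> bool" where
  "borel_sections A \<longleftrightarrow> (\<forall>m. {s. (s, m) \<in> A} \<in> sets borel)"

lemma fractional_allocation_indicator: "borel_sections A \<Longrightarrow> fractional_allocation (indicator A)"
proof -
  assume A: "borel_sections A"
  have "(\<lambda>s. indicator {0..1} s *\<^sub>R indicator A (s, m)) = (indicator ({0..1} \<inter> {s. (s, m) \<in> A}) :: real \<Rightarrow> real)"
    for m by (auto simp: indicator_def)
  with A show ?thesis
    unfolding fractional_allocation_def set_borel_measurable_def borel_sections_def
    by (auto simp: indicator_def)
qed

lemma borel_sections_Un: "borel_sections A \<Longrightarrow> borel_sections B \<Longrightarrow> borel_sections (A \<union> B)"
  unfolding borel_sections_def by (auto simp: Collect_disj_eq)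

lemma borel_sections_cutoff: "borel_sections R \<Longrightarrow> borel_sections {\<theta>\<in>R. t < fst \<theta>}"
proof -
  have "{s. (s, m) \<in> {\<theta>\<in>R. t < fst \<theta>}} = {s. (s, m) \<in> R} \<inter> {t<..}" for m by auto
  then show "borel_sections R \<Longrightarrow> ?thesis" unfolding borel_sections_def by auto
qed

lemma borel_sections_remaining: "borel_sections A \<Longrightarrow> borel_sections {\<theta>. snd \<theta> \<in> E \<and> \<theta> \<notin> A}"
proof -
  have "{s. (s, m) \<in> {\<theta>. snd \<theta> \<in> E \<and> \<theta> \<notin> A}} = (if m \<in> E then - {s. (s, m) \<in> A} else {})" for m
    by auto
  then show "borel_sections A \<Longrightarrow> ?thesis" unfolding borel_sections_def by auto
qed

section \<open>Welfare in a single state\<close>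

locale allocation_problem =
  fixes d :: "real \<times> 'm::finite \<Rightarrow> real" and h :: "real \<Rightarrow> real"
    and u :: "'m \<Rightarrow> real \<Rightarrow> real" and q :: real
  assumes q: "0 < q" "q < 1"
    and d_nonneg: "\<And>s m. 0 \<le> d (s, m)"
    and d_integrable: "\<And>m. set_integrable lborel {0..1} (\<lambda>s. d (s, m))"
    and d_total: "(\<Sum>m\<in>UNIV. LINT s:{0..1}|lborel. d (s, m)) = 1"
    and h_cont: "continuous_on {0..1} h" and h_mono: "mono_on {0..1} h"
    and u_concave: "\<And>m. concave_on {0..1} (u m)"
    and u_cont: "\<And>m. continuous_on {0..1} (u m)"
    and u_differentiable: "\<And>m. u m differentiable (at q)"
    and marginal_nonneg: "\<And>m. 0 \<le> h 0 + deriv (u m) q"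
begin

definition group_mass :: "'m \<Rightarrow> real" where
  "group_mass m = (LINT s:{0..1}|lborel. d (s, m))"

definition group_score :: "(real \<times> 'm \<Rightarrow> real) \<Rightarrow> 'm \<Rightarrow> real" where
  "group_score \<mu> m = (LINT s:{0..1}|lborel. \<mu> (s, m) * h s * d (s, m))"

definition welfare :: "(real \<times> 'm \<Rightarrow> real) \<Rightarrow> real" where
  "welfare \<mu> = sbar h \<mu> d + (\<Sum>m\<in>UNIV. u m (xm \<mu> d m))"

lemma welfare_eq_sum: "welfare \<mu> = (\<Sum>m\<in>UNIV. group_score \<mu> m + u m (xm \<mu> d m))"
  unfolding welfare_def sbar_def group_score_def by (simp add: sum.distrib)

lemma h_integrable: "set_integrable lborel {0..1} (\<lambda>s. h s * d (s, m))"
proof -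
  obtain B where "\<forall>x\<in>h ` {0..1}. norm x \<le> B"
    using compact_imp_bounded[OF compact_continuous_image[OF h_cont compact_Icc]]
    unfolding bounded_iff by blast
  then show ?thesis
    using set_measurable_continuous_on[OF _ h_cont]
    by (intro set_integrable_bounded_mult[OF _ _ d_integrable, of _ B]) auto
qed

lemma xm_integrable:
  "fractional_allocation \<mu> \<Longrightarrow> set_integrable lborel {0..1} (\<lambda>s. \<mu> (s, m) * d (s, m))"
  unfolding fractional_allocation_def
  by (intro set_integrable_bounded_mult[OF _ _ d_integrable, of _ 1]) auto

lemma score_integrable:
  "fractional_allocation \<mu> \<Longrightarrow> set_integrable lborel {0..1} (\<lambda>s. \<mu> (s, m) * h s * d (s, m))"
  unfolding fractional_allocation_def mult.assoc
  by (intro set_integrable_bounded_mult[OF _ _ h_integrable, of _ 1]) auto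

lemma xm_nonneg: "fractional_allocation \<mu> \<Longrightarrow> 0 \<le> xm \<mu> d m"
  unfolding xm_def set_lebesgue_integral_def using d_nonneg
  by (intro Bochner_Integration.integral_nonneg) (auto simp: fractional_allocation_def indicator_def)

lemma xm_le_group_mass: "fractional_allocation \<mu> \<Longrightarrow> xm \<mu> d m \<le> group_mass m"
  unfolding xm_def group_mass_def using d_nonneg
  by (intro set_integral_mono xm_integrable d_integrable)
     (auto simp: fractional_allocation_def intro!: mult_left_le_one_le)

lemma xm_le_total: "fractional_allocation \<mu> \<Longrightarrow> xm \<mu> d m \<le> total \<mu> d"
  unfolding total_def by (rule member_le_sum) (auto intro: xm_nonneg)

lemma total_nonneg: "fractional_allocation \<mu> \<Longrightarrow> 0 \<le> total \<mu> d"
  unfolding total_def by (intro sum_nonneg xm_nonneg)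

lemma total_linear:
  assumes "fractional_allocation \<mu>" "fractional_allocation \<nu>"
  shows "total (\<lambda>\<theta>. a * \<mu> \<theta> + b * \<nu> \<theta>) d = a * total \<mu> d + b * total \<nu> d"
proof -
  have "xm (\<lambda>\<theta>. a * \<mu> \<theta> + b * \<nu> \<theta>) d m = a * xm \<mu> d m + b * xm \<nu> d m" for m
    unfolding xm_def using xm_integrable[OF assms(1), of m] xm_integrable[OF assms(2), of m]
    by (simp add: algebra_simps)
  then show ?thesis unfolding total_def by (simp add: sum.distrib sum_distrib_left)
qed

lemma total_one: "total (\<lambda>_. 1) d = 1"
  unfolding total_def xm_def using d_total by simp

lemma group_score_gain_ge:
  assumes \<mu>: "fractional_allocation \<mu>" and \<nu>: "fractional_allocation \<nu>"
    and sign: "\<And>s. s \<in> {0..1} \<Longrightarrow> 0 \<le> (\<nu> (s, m) - \<mu> (s, m)) * (h s - c)"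
  shows "c * (xm \<nu> d m - xm \<mu> d m) \<le> group_score \<nu> m - group_score \<mu> m"
proof -
  have "c * (xm \<nu> d m - xm \<mu> d m) = (LINT s:{0..1}|lborel. c * (\<nu> (s, m) * d (s, m) - \<mu> (s, m) * d (s, m)))"
    unfolding xm_def using xm_integrable[OF \<mu>] xm_integrable[OF \<nu>] by simp
  also have "\<dots> \<le> (LINT s:{0..1}|lborel. \<nu> (s, m) * h s * d (s, m) - \<mu> (s, m) * h s * d (s, m))"
  proof (rule set_integral_mono)
    fix s :: real assume "s \<in> {0..1}"
    then have "0 \<le> (\<nu> (s, m) - \<mu> (s, m)) * (h s - c) * d (s, m)"
      using sign d_nonneg by simp
    then show "c * (\<nu> (s, m) * d (s, m) - \<mu> (s, m) * d (s, m)) \<le> \<nu> (s, m) * h s * d (s, m) - \<mu> (s, m) * h s * d (s, m)"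
      by (simp add: algebra_simps)
  qed (use xm_integrable[OF \<mu>] xm_integrable[OF \<nu>] score_integrable[OF \<mu>] score_integrable[OF \<nu>] in auto)
  also have "\<dots> = group_score \<nu> m - group_score \<mu> m"
    unfolding group_score_def using score_integrable[OF \<mu>] score_integrable[OF \<nu>] by simp
  finally show ?thesis .
qed

text \<open>Serving more agents never hurts: the marginal agent has score at least \<open>h 0\<close>, and
  by concavity the marginal loss in \<open>u m\<close> below \<open>q\<close> is at most \<open>-deriv (u m) q\<close>.\<close>
lemma welfare_mono:
  assumes \<mu>: "fractional_allocation \<mu>" and \<nu>: "fractional_allocation \<nu>"
    and le: "\<And>s m. s \<in> {0..1} \<Longrightarrow> \<mu> (s, m) \<le> \<nu> (s, m)" and "total \<nu> d \<le> q"
  shows "welfare \<mu> \<le> welfare \<nu>"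
  unfolding welfare_eq_sum
proof (rule sum_mono)
  fix m
  have xm_le: "xm \<mu> d m \<le> xm \<nu> d m"
    unfolding xm_def using le d_nonneg
    by (intro set_integral_mono xm_integrable \<mu> \<nu>) (auto intro: mult_right_mono)
  have "xm \<nu> d m \<le> q" using xm_le_total[OF \<nu>, of m] \<open>total \<nu> d \<le> q\<close> by linarith
  have "h 0 * (xm \<nu> d m - xm \<mu> d m) \<le> group_score \<nu> m - group_score \<mu> m"
    using le h_mono by (intro group_score_gain_ge \<mu> \<nu>) (auto simp: mono_on_def)
  moreover have "deriv (u m) q * (xm \<nu> d m - xm \<mu> d m) \<le> u m (xm \<nu> d m) - u m (xm \<mu> d m)"
  proof (rule concave_on_increment_ge_deriv[OF u_concave])
    show "(u m has_real_derivative deriv (u m) q) (at q within {0..1})"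
      using u_differentiable DERIV_deriv_iff_real_differentiable has_field_derivative_at_within by blast
  qed (use q xm_nonneg[OF \<mu>] xm_le \<open>xm \<nu> d m \<le> q\<close> in auto)
  moreover have "0 \<le> (h 0 + deriv (u m) q) * (xm \<nu> d m - xm \<mu> d m)"
    using marginal_nonneg xm_le by simp
  ultimately show "group_score \<mu> m + u m (xm \<mu> d m) \<le> group_score \<nu> m + u m (xm \<nu> d m)"
    by (simp add: algebra_simps)
qed

lemma welfare_le_if_rearranged:
  assumes \<mu>: "fractional_allocation \<mu>" and \<nu>: "fractional_allocation \<nu>"
    and same_mass: "\<And>m. xm \<mu> d m = xm \<nu> d m"
    and sign: "\<And>m. \<exists>c. \<forall>s\<in>{0..1}. 0 \<le> (\<nu> (s, m) - \<mu> (s, m)) * (h s - c)"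
  shows "welfare \<mu> \<le> welfare \<nu>"
  unfolding welfare_eq_sum
proof (rule sum_mono)
  fix m
  obtain c where "\<forall>s\<in>{0..1}. 0 \<le> (\<nu> (s, m) - \<mu> (s, m)) * (h s - c)" using sign by blast
  then have "c * (xm \<nu> d m - xm \<mu> d m) \<le> group_score \<nu> m - group_score \<mu> m"
    by (intro group_score_gain_ge \<mu> \<nu>) auto
  then show "group_score \<mu> m + u m (xm \<mu> d m) \<le> group_score \<nu> m + u m (xm \<nu> d m)"
    using same_mass[of m] by simp
qed

subsection \<open>Threshold allocations\<close>

definition threshold_alloc :: "real^'m \<Rightarrow> real \<times> 'm \<Rightarrow> real" where
  "threshold_alloc t \<theta> = (if t $ snd \<theta> < fst \<theta> then 1 else 0)"

definition upper_mass :: "'m \<Rightarrow> real \<Rightarrow> real" where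
  "upper_mass m \<tau> = (LINT s:{0..1}|lborel. (if \<tau> < s then d (s, m) else 0))"

definition upper_score :: "'m \<Rightarrow> real \<Rightarrow> real" where
  "upper_score m \<tau> = (LINT s:{0..1}|lborel. (if \<tau> < s then h s * d (s, m) else 0))"

text \<open>Thresholds range over \<open>[-1, 1]\<close> so that \<open>t $ m = -1\<close> serves all of group \<open>m\<close>.\<close>
definition feasible_thresholds :: "(real^'m) set" where
  "feasible_thresholds = {t. (\<forall>m. t $ m \<in> {-1..1}) \<and> (\<Sum>m\<in>UNIV. upper_mass m (t $ m)) \<le> q}"

lemma fractional_threshold_alloc: "fractional_allocation (threshold_alloc t)"
proof -
  have "(\<lambda>s. indicator {0..1} s *\<^sub>R threshold_alloc t (s, m)) = (indicator ({0..1} \<inter> {t $ m<..}) :: real \<Rightarrow> real)"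
    for m by (auto simp: threshold_alloc_def indicator_def)
  then show ?thesis
    unfolding fractional_allocation_def set_borel_measurable_def by (simp add: threshold_alloc_def)
qed

lemma xm_threshold_alloc: "xm (threshold_alloc t) d m = upper_mass m (t $ m)"
  unfolding xm_def upper_mass_def threshold_alloc_def by (intro set_lebesgue_integral_cong) auto

lemma welfare_threshold_alloc:
  "welfare (threshold_alloc t) = (\<Sum>m\<in>UNIV. upper_score m (t $ m) + u m (upper_mass m (t $ m)))"
proof -
  have "group_score (threshold_alloc t) m = upper_score m (t $ m)" for m
    unfolding group_score_def upper_score_def threshold_alloc_def
    by (intro set_lebesgue_integral_cong) auto
  then show ?thesis unfolding welfare_eq_sum xm_threshold_alloc by simp
qed

lemma total_threshold_alloc: "total (threshold_alloc t) d = (\<Sum>m\<in>UNIV. upper_mass m (t $ m))"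
  unfolding total_def xm_threshold_alloc ..

lemma upper_mass_below: "\<tau> < 0 \<Longrightarrow> upper_mass m \<tau> = group_mass m"
  unfolding upper_mass_def group_mass_def by (intro set_lebesgue_integral_cong) auto

lemma upper_mass_above: "1 \<le> \<tau> \<Longrightarrow> upper_mass m \<tau> = 0"
  unfolding upper_mass_def by (subst set_lebesgue_integral_cong[of _ _ _ "\<lambda>_. 0"]) auto

lemma upper_mass_bounds: "0 \<le> upper_mass m \<tau> \<and> upper_mass m \<tau> \<le> group_mass m"
  using xm_nonneg[OF fractional_threshold_alloc, of "vec \<tau>" m]
    xm_le_group_mass[OF fractional_threshold_alloc, of "vec \<tau>" m]
  by (simp add: xm_threshold_alloc)

lemma group_mass_le_one: "group_mass m \<le> 1"
proof -
  have "0 \<le> group_mass m" for m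
    using upper_mass_bounds[of m 0] by linarith
  then have "group_mass m \<le> (\<Sum>m\<in>UNIV. group_mass m)"
    by (intro member_le_sum) auto
  then show ?thesis using d_total unfolding group_mass_def by simp
qed

lemma upper_mass_continuous: "continuous_on UNIV (upper_mass m)"
  unfolding upper_mass_def[abs_def] by (rule continuous_on_tail_integral[OF d_integrable])

lemma upper_score_continuous: "continuous_on UNIV (upper_score m)"
  unfolding upper_score_def[abs_def] by (rule continuous_on_tail_integral[OF h_integrable])

lemma threshold_share_sign:
  assumes "fractional_allocation \<mu>" "\<tau> \<le> 1" "s \<in> {0..1}"
  shows "0 \<le> ((if \<tau> < s then 1 else 0) - \<mu> (s, m)) * (h s - h (max 0 \<tau>))"
proof -
  have \<mu>: "0 \<le> \<mu> (s, m)" "\<mu> (s, m) \<le> 1"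
    using assms(1) unfolding fractional_allocation_def by auto
  show ?thesis
  proof (cases "\<tau> < s")
    case True
    then have "h (max 0 \<tau>) \<le> h s" using assms(2,3) by (intro mono_onD[OF h_mono]) auto
    then show ?thesis using True \<mu> by simp
  next
    case False
    then have "h s \<le> h (max 0 \<tau>)" using assms(2,3) by (intro mono_onD[OF h_mono]) auto
    then show ?thesis using False \<mu> by (simp add: mult_nonneg_nonpos)
  qed
qed

text \<open>Rearrangement: the threshold with the same group masses serves the highest scores.\<close>
lemma welfare_le_threshold_alloc:
  assumes \<mu>: "fractional_allocation \<mu>" and "total \<mu> d \<le> q"
  shows "\<exists>t\<in>feasible_thresholds. welfare \<mu> \<le> welfare (threshold_alloc t)"
proof -
  have "\<exists>\<tau>. -1 \<le> \<tau> \<and> \<tau> \<le> 1 \<and> upper_mass m \<tau> = xm \<mu> d m" for m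
    using xm_nonneg[OF \<mu>] xm_le_group_mass[OF \<mu>] upper_mass_above[of 1] upper_mass_below[of "-1"]
    by (intro IVT2' continuous_on_subset[OF upper_mass_continuous]) auto
  then obtain T where T: "\<And>m. T m \<in> {-1..1} \<and> upper_mass m (T m) = xm \<mu> d m"
    by (metis atLeastAtMost_iff)
  define t :: "real^'m" where "t = (\<chi> m. T m)"
  have t: "t $ m \<in> {-1..1} \<and> upper_mass m (t $ m) = xm \<mu> d m" for m
    using T by (simp add: t_def)
  have "t \<in> feasible_thresholds"
    using t \<open>total \<mu> d \<le> q\<close> by (simp add: feasible_thresholds_def total_def)
  moreover have "welfare \<mu> \<le> welfare (threshold_alloc t)"
  proof (rule welfare_le_if_rearranged[OF \<mu> fractional_threshold_alloc])
    show "xm \<mu> d m = xm (threshold_alloc t) d m" for m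
      using t by (simp add: xm_threshold_alloc)
    fix m
    have "0 \<le> (threshold_alloc t (s, m) - \<mu> (s, m)) * (h s - h (max 0 (t $ m)))"
      if "s \<in> {0..1}" for s
      using threshold_share_sign[OF \<mu> _ that, of "t $ m" m] t[of m]
      by (simp only: threshold_alloc_def fst_conv snd_conv atLeastAtMost_iff)
    then show "\<exists>c. \<forall>s\<in>{0..1}. 0 \<le> (threshold_alloc t (s, m) - \<mu> (s, m)) * (h s - c)"
      by blast
  qed
  ultimately show ?thesis by blast
qed

lemma compact_feasible_thresholds: "compact feasible_thresholds"
proof -
  have "continuous_on UNIV (\<lambda>t::real^'m. \<Sum>m\<in>UNIV. upper_mass m (t $ m))"
    by (intro continuous_on_sum continuous_on_compose2[OF upper_mass_continuous]
        continuous_on_component continuous_on_id) auto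
  then have "closed {t::real^'m. (\<Sum>m\<in>UNIV. upper_mass m (t $ m)) \<le> q}"
    by (intro closed_Collect_le continuous_on_const) auto
  moreover have "feasible_thresholds = cbox (vec (-1)) (vec 1) \<inter> {t. (\<Sum>m\<in>UNIV. upper_mass m (t $ m)) \<le> q}"
    unfolding feasible_thresholds_def by (auto simp: mem_box_cart)
  ultimately show ?thesis by (simp add: compact_Int_closed)
qed

lemma continuous_on_threshold_welfare:
  "continuous_on feasible_thresholds (\<lambda>t. welfare (threshold_alloc t))"
  unfolding welfare_threshold_alloc
proof (intro continuous_on_sum continuous_on_add)
  fix m
  show "continuous_on feasible_thresholds (\<lambda>t. upper_score m (t $ m))"
    by (intro continuous_on_compose2[OF upper_score_continuous] continuous_on_component continuous_on_id) auto
  have "upper_mass m \<tau> \<in> {0..1}" for \<tau>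
    using upper_mass_bounds[of m \<tau>] group_mass_le_one[of m] by simp
  then show "continuous_on feasible_thresholds (\<lambda>t. u m (upper_mass m (t $ m)))"
    by (intro continuous_on_compose2[OF u_cont] continuous_on_compose2[OF upper_mass_continuous]
        continuous_on_component continuous_on_id) auto
qed

lemma exists_optimal_threshold:
  "\<exists>t\<in>feasible_thresholds. \<forall>\<mu>. fractional_allocation \<mu> \<and> total \<mu> d \<le> q \<longrightarrow>
     welfare \<mu> \<le> welfare (threshold_alloc t)"
proof -
  have "vec 1 \<in> feasible_thresholds"
    using q by (simp add: feasible_thresholds_def upper_mass_above)
  then obtain t where "t \<in> feasible_thresholds"
    and best: "\<And>t'. t' \<in> feasible_thresholds \<Longrightarrow> welfare (threshold_alloc t') \<le> welfare (threshold_alloc t)"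
    using continuous_attains_sup[OF compact_feasible_thresholds _ continuous_on_threshold_welfare] by blast
  have "welfare \<mu> \<le> welfare (threshold_alloc t)"
    if \<mu>: "fractional_allocation \<mu>" "total \<mu> d \<le> q" for \<mu>
  proof -
    obtain t' where "t' \<in> feasible_thresholds" "welfare \<mu> \<le> welfare (threshold_alloc t')"
      using welfare_le_threshold_alloc[OF \<mu>] by blast
    with best show ?thesis by force
  qed
  with \<open>t \<in> feasible_thresholds\<close> show ?thesis by blast
qed

subsection \<open>Priority mechanisms\<close>

lemma prio_alloc_binary_policy:
  assumes P01: "\<And>\<theta>. P \<theta> \<in> {0, 1}" and P: "fractional_allocation P" and "total P d \<le> q"
  defines "a \<equiv> (q - total P d) / (1 - total P d)"
  shows "prio_alloc q P d = (\<lambda>\<theta>. a + (1 - a) * P \<theta>)"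
proof -
  define T where "T = total P d"
  have cut: "(if P \<theta> > p then 1 else 0 :: real) = (if p < 0 then 1 else if p < 1 then P \<theta> else 0)"
    for \<theta> p using P01[of \<theta>] by auto
  have "total (\<lambda>_. 0) d = 0" by (simp add: total_def xm_def)
  then have upper: "prio_upper P d p = (if p < 0 then 1 else if p < 1 then T else 0)" for p
    unfolding prio_upper_def cut by (cases "p < 0"; cases "p < 1") (simp_all add: total_one T_def)
  have "{p. prio_upper P d p \<le> q} = {0..}"
    using q \<open>total P d \<le> q\<close> by (force simp: upper T_def)
  then have cutoff: "Inf {p. prio_upper P d p \<le> q} = 0" by simp
  have "(\<lambda>\<theta>. if P \<theta> = 0 then 1 else 0 :: real) = (\<lambda>\<theta>. 1 * 1 + (-1) * P \<theta>)"
    using P01 by (force simp: fun_eq_iff)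
  then have tie: "prio_tie P d 0 = 1 - T"
    unfolding prio_tie_def T_def
    using total_linear[OF fractional_allocation_const P, of 1 1 "-1"] total_one by simp
  have "\<not> total (\<lambda>_. 1) d \<le> q" using total_one q by simp
  then have "prio_alloc q P d \<theta> = (if P \<theta> > 0 then 1 else if P \<theta> = 0 then a else 0)" for \<theta>
    unfolding prio_alloc_def Let_def cutoff by (simp add: upper tie a_def T_def)
  then show ?thesis
    using P01 by (force simp: fun_eq_iff)
qed

lemma welfare_le_prio_alloc:
  assumes P01: "\<And>\<theta>. P \<theta> \<in> {0, 1}" and P: "fractional_allocation P" and "total P d \<le> q"
  shows "welfare P \<le> welfare (prio_alloc q P d)"
proof -
  define a where "a = (q - total P d) / (1 - total P d)"
  have T: "0 \<le> total P d" "total P d \<le> q" "total P d < 1"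
    using total_nonneg[OF P] \<open>total P d \<le> q\<close> q by auto
  then have a: "0 \<le> a" "a \<le> 1" "a * (1 - total P d) = q - total P d"
    using q unfolding a_def by (auto simp: divide_simps)
  have prio: "prio_alloc q P d = (\<lambda>\<theta>. a + (1 - a) * P \<theta>)"
    unfolding a_def by (rule prio_alloc_binary_policy[OF P01 P \<open>total P d \<le> q\<close>])
  have "total (\<lambda>\<theta>. a * 1 + (1 - a) * P \<theta>) d = a + (1 - a) * total P d"
    using total_linear[OF fractional_allocation_const P, of 1] total_one by simp
  also have "\<dots> = q" using a(3) by (simp add: algebra_simps)
  finally have "total (prio_alloc q P d) d = q" by (simp add: prio)
  moreover have "P \<theta> \<le> a + (1 - a) * P \<theta>" for \<theta>
    using P01[of \<theta>] a by auto
  ultimately show ?thesis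
    unfolding prio by (intro welfare_mono P fractional_allocation_mix a(1,2)) auto
qed

subsection \<open>Filling rounds and quota mechanisms\<close>

lemma mass_Un_disjoint:
  assumes "borel_sections A" "borel_sections B" "A \<inter> B = {}"
  shows "mass d (A \<union> B) = mass d A + mass d B"
proof -
  have "indicator (A \<union> B) = (\<lambda>\<theta>. 1 * indicator A \<theta> + 1 * indicator B \<theta> :: real)"
    using assms(3) by (auto simp: indicator_def fun_eq_iff)
  then show ?thesis
    unfolding mass_def
    using total_linear[OF fractional_allocation_indicator fractional_allocation_indicator,
        OF assms(1,2), of 1 1]
    by simp
qed

lemma mass_within_group: "X \<subseteq> {\<theta>. snd \<theta> = m} \<Longrightarrow> mass d X = xm (indicator X) d m"
proof -
  assume X: "X \<subseteq> {\<theta>. snd \<theta> = m}"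
  have "xm (indicator X) d m' = 0" if "m' \<noteq> m" for m'
  proof -
    have "indicator X (s, m') = (0::real)" for s using X that by (auto simp: indicator_def)
    then show ?thesis by (simp add: xm_def)
  qed
  then show ?thesis
    unfolding mass_def total_def by (subst sum.remove[of _ m]) auto
qed

lemma mass_cutoff_eq:
  "mass d {\<theta>\<in>R. t < fst \<theta>} =
     (\<Sum>m\<in>UNIV. LINT s:{0..1}|lborel. (if t < s then indicator R (s, m) * d (s, m) else 0))"
  unfolding mass_def total_def xm_def
  by (intro sum.cong refl set_lebesgue_integral_cong) (auto simp: indicator_def)

lemma mass_cutoff_continuous:
  "borel_sections R \<Longrightarrow> continuous_on UNIV (\<lambda>t. mass d {\<theta>\<in>R. t < fst \<theta>})"
  unfolding mass_cutoff_eq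
  by (intro continuous_on_sum continuous_on_tail_integral xm_integrable fractional_allocation_indicator)

lemma mass_cutoff_below: "t < 0 \<Longrightarrow> mass d {\<theta>\<in>R. t < fst \<theta>} = mass d R"
  unfolding mass_def total_def xm_def
  by (intro sum.cong refl set_lebesgue_integral_cong) (auto simp: indicator_def)

lemma mass_cutoff_above: "1 \<le> t \<Longrightarrow> mass d {\<theta>\<in>R. t < fst \<theta>} = 0"
  unfolding mass_cutoff_eq
  by (intro sum.neutral ballI, subst set_lebesgue_integral_cong[where g = "\<lambda>_. 0"]) auto

lemma fill_cases:
  fixes E :: "'m set"
  assumes A: "borel_sections A" and k: "0 \<le> k"
  defines "R \<equiv> {\<theta>. snd \<theta> \<in> E \<and> \<theta> \<notin> A}"
  obtains (all) "fill d A E k = A \<union> R" "mass d R \<le> k"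
    | (cutoff) \<tau> where "\<tau> \<in> {0..1}" "fill d A E k = A \<union> {\<theta>\<in>R. \<tau> < fst \<theta>}"
        "mass d {\<theta>\<in>R. \<tau> < fst \<theta>} = k"
proof (cases "mass d R \<le> k")
  case True
  then show ?thesis by (intro all) (simp_all add: fill_def R_def)
next
  case False
  have "borel_sections R" unfolding R_def by (rule borel_sections_remaining[OF A])
  then have "Inf {t. mass d {\<theta>\<in>R. t < fst \<theta>} \<le> k} \<in> {0..1} \<and>
      mass d {\<theta>\<in>R. Inf {t. mass d {\<theta>\<in>R. t < fst \<theta>} \<le> k} < fst \<theta>} = k"
    using False k
    by (intro Inf_sublevel_attains_level[where c = "mass d R"] mass_cutoff_continuous mass_cutoff_below mass_cutoff_above) auto
  with False show ?thesis
    by (intro cutoff[of "Inf {t. mass d {\<theta>\<in>R. t < fst \<theta>} \<le> k}"]) (auto simp: fill_def R_def Let_def)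
qed

lemma fill_feasible:
  assumes A: "borel_sections A" and k: "0 \<le> k"
  shows "A \<subseteq> fill d A E k" "borel_sections (fill d A E k)" "mass d (fill d A E k) \<le> mass d A + k"
proof -
  define R where "R = {\<theta>. snd \<theta> \<in> E \<and> \<theta> \<notin> A}"
  have R: "borel_sections R" unfolding R_def by (rule borel_sections_remaining[OF A])
  obtain C where C: "fill d A E k = A \<union> C" "C \<subseteq> R" "borel_sections C" "mass d C \<le> k"
  proof (cases rule: fill_cases[OF A k, of E, case_names all cutoff])
    case all
    from all[folded R_def] show ?thesis by (intro that[of R] R) auto
  next
    case (cutoff \<tau>)
    from cutoff(2,3)[folded R_def] show ?thesis
      by (intro that[of "{\<theta>\<in>R. \<tau> < fst \<theta>}"] borel_sections_cutoff[OF R]) auto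
  qed
  have "A \<inter> C = {}" using C(2) by (auto simp: R_def)
  then show "A \<subseteq> fill d A E k" "borel_sections (fill d A E k)" "mass d (fill d A E k) \<le> mass d A + k"
    using C A by (simp_all add: mass_Un_disjoint borel_sections_Un)
qed

definition group_top :: "'m \<Rightarrow> real \<Rightarrow> (real \<times> 'm) set" where
  "group_top m k = fill d {} {m} k"

lemma group_top_subset: "group_top m k \<subseteq> {\<theta>. snd \<theta> = m}"
  by (auto simp: group_top_def fill_def Let_def)

lemma fill_disjoint_group:
  assumes "A \<inter> {\<theta>. snd \<theta> = m} = {}"
  shows "fill d A {m} k = A \<union> group_top m k"
proof -
  have "{\<theta>. snd \<theta> \<in> {m} \<and> \<theta> \<notin> A} = {\<theta>. snd \<theta> \<in> {m} \<and> \<theta> \<notin> {}}" using assms by auto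
  then show ?thesis by (simp add: group_top_def fill_def Let_def)
qed

lemma group_top:
  assumes k: "0 \<le> k" "k \<le> group_mass m"
  shows "borel_sections (group_top m k)" "xm (indicator (group_top m k)) d m = k"
    "\<exists>\<tau>\<le>1. \<forall>s\<in>{0..1}. (s, m) \<in> group_top m k \<longleftrightarrow> \<tau> < s"
proof -
  have empty: "borel_sections {}" by (simp add: borel_sections_def)
  show "borel_sections (group_top m k)"
    unfolding group_top_def by (rule fill_feasible(2)[OF empty k(1)])
  have group: "{\<theta>. snd \<theta> \<in> {m} \<and> \<theta> \<notin> {}} = {\<theta>. snd \<theta> = m}" by auto
  have group_mass: "mass d {\<theta>. snd \<theta> = m} = group_mass m"
    using mass_within_group[of "{\<theta>. snd \<theta> = m}" m]
    by (simp add: xm_def group_mass_def indicator_def)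
  have "mass d (group_top m k) = k \<and> (\<exists>\<tau>\<le>1. \<forall>s\<in>{0..1}. (s, m) \<in> group_top m k \<longleftrightarrow> \<tau> < s)"
  proof (cases rule: fill_cases[OF empty k(1), of "{m}", case_names all cutoff])
    case all
    then show ?thesis using k group_mass by (intro conjI exI[of _ "-1"]) (auto simp: group_top_def group)
  next
    case (cutoff \<tau>)
    then show ?thesis by (intro conjI exI[of _ \<tau>]) (auto simp: group_top_def group)
  qed
  then show "xm (indicator (group_top m k)) d m = k"
    "\<exists>\<tau>\<le>1. \<forall>s\<in>{0..1}. (s, m) \<in> group_top m k \<longleftrightarrow> \<tau> < s"
    using mass_within_group[OF group_top_subset] by auto
qed

definition group_tops :: "('m \<Rightarrow> real) \<Rightarrow> (real \<times> 'm) set" where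
  "group_tops Q = {\<theta>. \<theta> \<in> group_top (snd \<theta>) (Q (snd \<theta>))}"

lemma group_tops:
  assumes "\<And>m. 0 \<le> Q m" "\<And>m. Q m \<le> group_mass m"
  shows "borel_sections (group_tops Q)" "xm (indicator (group_tops Q)) d m = Q m"
    "\<exists>\<tau>\<le>1. \<forall>s\<in>{0..1}. indicator (group_tops Q) (s, m) = (if \<tau> < s then 1 else 0 :: real)"
proof -
  have membership: "(s, m) \<in> group_tops Q \<longleftrightarrow> (s, m) \<in> group_top m (Q m)" for s m
    by (simp add: group_tops_def)
  note top = group_top[OF assms]
  show "borel_sections (group_tops Q)"
    using top(1) unfolding borel_sections_def membership by blast
  show "xm (indicator (group_tops Q)) d m = Q m"
    using top(2)[of m] unfolding xm_def indicator_def membership .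
  show "\<exists>\<tau>\<le>1. \<forall>s\<in>{0..1}. indicator (group_tops Q) (s, m) = (if \<tau> < s then 1 else 0 :: real)"
    using top(3)[of m] unfolding indicator_def membership by auto
qed

definition reserve_round :: "('m \<Rightarrow> real) \<Rightarrow> ('m option \<Rightarrow> nat) \<Rightarrow> nat \<Rightarrow> (real \<times> 'm) set \<Rightarrow> (real \<times> 'm) set" where
  "reserve_round Q D i A = fill d A (reserve_groups (inv_into UNIV D i)) (reserve_amt q Q (inv_into UNIV D i))"

lemma fold_reserve_rounds_groups:
  assumes e: "bij_betw e UNIV {0..<CARD('m)}"
    and D: "D = (\<lambda>r. case r of None \<Rightarrow> CARD('m) + 1 | Some m \<Rightarrow> Suc (e m))"
  shows "fold (reserve_round Q D) [1..<CARD('m) + 1] {} = group_tops Q"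
proof -
  have "bij_betw D UNIV {1..CARD('m) + 1}"
    unfolding D by (rule bij_betw_reserves_then_residual[OF e])
  then have inv: "inv_into UNIV D (D r) = r" for r
    by (simp add: bij_betw_def)
  have e_inj: "e m = e m' \<Longrightarrow> m = m'" for m m'
    using e by (auto simp: bij_betw_def inj_def)
  have "fold (reserve_round Q D) [1..<n + 1] {} = {\<theta>\<in>group_tops Q. e (snd \<theta>) < n}"
    if "n \<le> CARD('m)" for n
    using that
  proof (induction n)
    case (Suc n)
    then obtain m where m: "e m = n"
      using e by (metis atLeastLessThan_iff bij_betw_iff_bijections less_eq_Suc_le zero_le)
    have "inv_into UNIV D (Suc n) = Some m" using inv[of "Some m"] m by (simp add: D)
    then have "reserve_round Q D (Suc n) A = fill d A {m} (Q m)" for A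
      by (simp add: reserve_round_def reserve_groups_def reserve_amt_def)
    then have "fold (reserve_round Q D) [1..<Suc n + 1] {} = fill d {\<theta>\<in>group_tops Q. e (snd \<theta>) < n} {m} (Q m)"
      using Suc by simp
    also have "\<dots> = {\<theta>\<in>group_tops Q. e (snd \<theta>) < n} \<union> group_top m (Q m)"
      using m by (intro fill_disjoint_group) auto
    also have "\<dots> = {\<theta>\<in>group_tops Q. e (snd \<theta>) < Suc n}"
      using group_top_subset[of m "Q m"] m e_inj by (auto simp: group_tops_def less_Suc_eq)
    finally show ?case .
  qed simp
  from this[OF order_refl]
  have "fold (reserve_round Q D) [1..<CARD('m) + 1] {} = {\<theta>\<in>group_tops Q. e (snd \<theta>) < CARD('m)}" .
  also have "\<dots> = group_tops Q"
    using e by (auto simp: bij_betw_def)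
  finally show ?thesis .
qed

lemma quota_alloc_covers_group_tops:
  assumes Q: "\<And>m. 0 \<le> Q m" "\<And>m. Q m \<le> group_mass m" "(\<Sum>m\<in>UNIV. Q m) \<le> q"
    and e: "bij_betw e UNIV {0..<CARD('m)}"
    and D: "D = (\<lambda>r. case r of None \<Rightarrow> CARD('m) + 1 | Some m \<Rightarrow> Suc (e m))"
  obtains A where "quota_alloc q Q D d = indicator A" "borel_sections A" "mass d A \<le> q"
    "group_tops Q \<subseteq> A"
proof -
  note tops = group_tops[OF Q(1,2)]
  have mass_tops: "mass d (group_tops Q) = (\<Sum>m\<in>UNIV. Q m)"
    unfolding mass_def total_def tops(2) ..
  have "bij_betw D UNIV {1..CARD('m) + 1}"
    unfolding D by (rule bij_betw_reserves_then_residual[OF e])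
  then have "inv_into UNIV D (D None) = None"
    by (simp add: bij_betw_def)
  then have "inv_into UNIV D (CARD('m) + 1) = None"
    by (simp add: D)
  then have rounds: "fold (reserve_round Q D) [1..<CARD('m) + 2] {} =
      fill d (group_tops Q) UNIV (q - (\<Sum>m\<in>UNIV. Q m))"
    using fold_reserve_rounds_groups[OF e D]
    by (simp add: reserve_round_def reserve_groups_def reserve_amt_def)
  define A1 where "A1 = fill d (group_tops Q) UNIV (q - (\<Sum>m\<in>UNIV. Q m))"
  define A2 where "A2 = fill d A1 UNIV (q - mass d A1)"
  have A1: "group_tops Q \<subseteq> A1" "borel_sections A1" "mass d A1 \<le> q"
    using fill_feasible[OF tops(1), of "q - (\<Sum>m\<in>UNIV. Q m)" UNIV] Q(3) mass_tops
    by (simp_all add: A1_def)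
  have "A1 \<subseteq> A2" "borel_sections A2" "mass d A2 \<le> q"
    using fill_feasible[OF A1(2), of "q - mass d A1" UNIV] A1(3) by (simp_all add: A2_def)
  moreover have "quota_alloc q Q D d = indicator A2"
    using rounds by (simp add: quota_alloc_def reserve_round_def[abs_def] A1_def A2_def)
  ultimately show ?thesis
    using that A1(1) by blast
qed

lemma welfare_le_quota_alloc:
  assumes "t \<in> feasible_thresholds"
  obtains D where "quota_policy q (\<lambda>m. upper_mass m (t $ m)) D"
    "welfare (threshold_alloc t) \<le> welfare (quota_alloc q (\<lambda>m. upper_mass m (t $ m)) D d)"
proof -
  define Q where "Q = (\<lambda>m. upper_mass m (t $ m))"
  have Q: "\<And>m. 0 \<le> Q m" "\<And>m. Q m \<le> group_mass m" "(\<Sum>m\<in>UNIV. Q m) \<le> q"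
    using upper_mass_bounds assms by (auto simp: Q_def feasible_thresholds_def)
  obtain e :: "'m \<Rightarrow> nat" where e: "bij_betw e UNIV {0..<CARD('m)}"
    using ex_bij_betw_finite_nat[of "UNIV :: 'm set"] by auto
  define D where "D = (\<lambda>r. case r of None \<Rightarrow> CARD('m) + 1 | Some m \<Rightarrow> Suc (e m))"
  have policy: "quota_policy q Q D"
    using Q bij_betw_reserves_then_residual[OF e] by (simp add: quota_policy_def D_def)
  obtain A where A: "quota_alloc q Q D d = indicator A" "borel_sections A" "mass d A \<le> q"
    "group_tops Q \<subseteq> A"
    using quota_alloc_covers_group_tops[OF Q e D_def] by blast
  note tops = group_tops[OF Q(1,2)]
  \<comment> \<open>The cutoffs of the group tops may differ from \<open>t\<close> on a \<open>d\<close>-null set of scores, hence rearrangement.\<close>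
  have "welfare (threshold_alloc t) \<le> welfare (indicator (group_tops Q))"
  proof (rule welfare_le_if_rearranged[OF fractional_threshold_alloc fractional_allocation_indicator[OF tops(1)]])
    show "xm (threshold_alloc t) d m = xm (indicator (group_tops Q)) d m" for m
      unfolding xm_threshold_alloc tops(2) by (simp add: Q_def)
    fix m
    obtain \<tau> where "\<tau> \<le> 1" and \<tau>: "\<forall>s\<in>{0..1}. indicator (group_tops Q) (s, m) = (if \<tau> < s then 1 else 0 :: real)"
      using tops(3) by blast
    then have "\<forall>s\<in>{0..1}. 0 \<le> (indicator (group_tops Q) (s, m) - threshold_alloc t (s, m)) * (h s - h (max 0 \<tau>))"
      using threshold_share_sign[OF fractional_threshold_alloc \<open>\<tau> \<le> 1\<close>] by simp
    then show "\<exists>c. \<forall>s\<in>{0..1}. 0 \<le> (indicator (group_tops Q) (s, m) - threshold_alloc t (s, m)) * (h s - c)"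
      by blast
  qed
  also have "\<dots> \<le> welfare (indicator A)"
    using A by (intro welfare_mono fractional_allocation_indicator tops(1)) (auto simp: indicator_def mass_def)
  finally show ?thesis
    using that[OF policy[unfolded Q_def]] A(1) by (simp add: Q_def)
qed

end

lemma allocation_problemI:
  fixes d :: "real \<times> 'm::finite \<Rightarrow> real"
  assumes "0 < q" "q < 1" "\<And>s m. 0 \<le> d (s, m)" "\<And>m. set_integrable lborel {0..1} (\<lambda>s. d (s, m))"
    "(\<Sum>m\<in>UNIV. LINT s:{0..1}|lborel. d (s, m)) = 1"
    "continuous_on {0..1} h" "strict_mono_on {0..1} h" "\<And>m. concave_on {0..1} (u m)"
    and u_diff: "\<And>m x. x \<in> {0..1} \<Longrightarrow> u m differentiable (at x within {0..1})"
    and "\<And>m. 0 \<le> h 0 + deriv (u m) q"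
  shows "allocation_problem d h u q"
proof
  show "u m differentiable (at q)" for m
    using u_diff[of q m] assms(1,2) at_within_interior[of q "{0..1}"] by simp
  show "continuous_on {0..1} (u m)" for m
    using u_diff differentiable_imp_continuous_within continuous_on_eq_continuous_within by blast
qed (use assms strict_mono_on_imp_mono_on in auto)

lemma Xi_return:
  "Xi g u h f \<phi> (return (count_space UNIV) \<omega>0) = xi g u h (\<phi> \<omega>0) (f \<omega>0)"
  unfolding Xi_def by (rule integral_return) auto

theorem proposition3:
  fixes f :: "'w \<Rightarrow> real \<times> 'm::finite \<Rightarrow> real"
    and h :: "real \<Rightarrow> real" and g :: "real \<Rightarrow> real" and u :: "'m \<Rightarrow> real \<Rightarrow> real"
    and q :: real and \<Lambda> :: "'w measure" and \<omega>0 :: 'w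
  assumes q: "0 < q" "q < 1"
    and dens_nonneg: "\<And>w s m. f w (s, m) \<ge> 0"
    and dens_int: "\<And>w m. set_integrable lborel {0..1} (\<lambda>s. f w (s, m))"
    and dens_prob: "\<And>w. (\<Sum>m\<in>UNIV. LINT s:{0..1}|lborel. f w (s, m)) = 1"
    and h_cont: "continuous_on {0..1} h" and h_mono: "strict_mono_on {0..1} h"
    and h_nonneg: "\<And>s. s \<in> {0..1} \<Longrightarrow> h s \<ge> 0"
    and g_cont: "continuous_on UNIV g" and g_mono: "strict_mono g"
    and u_conc: "\<And>m. concave_on {0..1} (u m)"
    and u_diff: "\<And>m x. x \<in> {0..1} \<Longrightarrow> u m differentiable (at x within {0..1})"
    and u_cond: "\<And>m. h 0 + deriv (u m) q \<ge> 0"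
    and dirac: "\<Lambda> = return (count_space UNIV) \<omega>0"
  shows "(\<exists>P. (\<forall>m. (\<lambda>s. P (s, m)) \<in> borel_measurable borel) \<and>
            (\<forall>\<phi>. mechanism q f \<phi> \<longrightarrow> Xi g u h f \<phi> \<Lambda> \<le> Xi g u h f (prio_mech q P f) \<Lambda>))
       \<and> (\<exists>Q D. quota_policy q Q D \<and>
            (\<forall>\<phi>. mechanism q f \<phi> \<longrightarrow> Xi g u h f \<phi> \<Lambda> \<le> Xi g u h f (quota_mech q Q D f) \<Lambda>))"
proof -
  interpret allocation_problem "f \<omega>0" h u q
    by (rule allocation_problemI) (use assms in auto)
  have Xi_eq: "Xi g u h f \<phi> \<Lambda> = g (welfare (\<phi> \<omega>0))" for \<phi>
    unfolding dirac Xi_return xi_def welfare_def ..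
  obtain t where t: "t \<in> feasible_thresholds" and best:
    "\<And>\<mu>. fractional_allocation \<mu> \<Longrightarrow> total \<mu> (f \<omega>0) \<le> q \<Longrightarrow> welfare \<mu> \<le> welfare (threshold_alloc t)"
    using exists_optimal_threshold by blast
  have opt: "welfare (\<phi> \<omega>0) \<le> welfare (threshold_alloc t)" if "mechanism q f \<phi>" for \<phi>
    using that best allocation_imp_fractional unfolding mechanism_def allocation_def by blast
  have "welfare (threshold_alloc t) \<le> welfare (prio_alloc q (threshold_alloc t) (f \<omega>0))"
    using t by (intro welfare_le_prio_alloc fractional_threshold_alloc)
      (auto simp: threshold_alloc_def total_threshold_alloc feasible_thresholds_def)
  moreover obtain D where "quota_policy q (\<lambda>m. upper_mass m (t $ m)) D"
    "welfare (threshold_alloc t) \<le> welfare (quota_alloc q (\<lambda>m. upper_mass m (t $ m)) D (f \<omega>0))"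
    using welfare_le_quota_alloc[OF t] by blast
  moreover have "(\<lambda>s. threshold_alloc t (s, m)) \<in> borel_measurable borel" for m
    by (simp add: threshold_alloc_def)
  ultimately show ?thesis
    unfolding Xi_eq prio_mech_def quota_mech_def
    using opt strict_mono_mono[OF g_mono] by (meson monoD order_trans)
qed

end
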